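(* Let $p$ be an odd prime and let $(G,H,T)$ be the envelope of a right conjugacy closed loop of order $2p$. Let $K$ be a subgroup with $H\lneq K\lneq G$, $|G:K|=2$ and $|K:H|=p$. Suppose $1\ne H\trianglelefteq K$. Then $|H|=p$ and there is an involution $a\in G\setminus K$ with $K=H\times H^a$. In particular $G\cong C_p\wr C_2$.
   Context: For a finite loop $\mathcal{L}$ with identity $e$: $G=\langle R_a\mid a\in\mathcal L\rangle$ with $R_a\colon x\mapsto xa$, $H$ the stabilizer of $e$ in $G$, $T=\{R_a\}$; $(G,H,T)$ is the envelope; the loop is right conjugacy closed if $T$ is a union of conjugacy classes of $G$. *)

theory Defs
  imports "HOL-Algebra.Algebra"
begin

definition loop :: "'a set \<Rightarrow> ('a \<Rightarrow> 'a \<Rightarrow> 'a) \<Rightarrow> 'a \<Rightarrow> bool" where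
  "loop L m e \<longleftrightarrow> e \<in> L \<and> (\<forall>x\<in>L. \<forall>y\<in>L. m x y \<in> L)
     \<and> (\<forall>x\<in>L. m e x = x \<and> m x e = x)
     \<and> (\<forall>a\<in>L. bij_betw (\<lambda>x. m x a) L L \<and> bij_betw (\<lambda>x. m a x) L L)"

definition Rmap :: "'a set \<Rightarrow> ('a \<Rightarrow> 'a \<Rightarrow> 'a) \<Rightarrow> 'a \<Rightarrow> ('a \<Rightarrow> 'a)" where
  "Rmap L m a = restrict (\<lambda>x. m x a) L"

definition env_group :: "'a set \<Rightarrow> ('a \<Rightarrow> 'a \<Rightarrow> 'a) \<Rightarrow> ('a \<Rightarrow> 'a) monoid" where
  "env_group L m = (BijGroup L)\<lparr>carrier := generate (BijGroup L) (Rmap L m ` L)\<rparr>"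

definition env_stab :: "'a set \<Rightarrow> ('a \<Rightarrow> 'a \<Rightarrow> 'a) \<Rightarrow> 'a \<Rightarrow> ('a \<Rightarrow> 'a) set" where
  "env_stab L m e = {g \<in> carrier (env_group L m). g e = e}"

definition env_T :: "'a set \<Rightarrow> ('a \<Rightarrow> 'a \<Rightarrow> 'a) \<Rightarrow> ('a \<Rightarrow> 'a) set" where
  "env_T L m = Rmap L m ` L"

definition rcc_loop :: "'a set \<Rightarrow> ('a \<Rightarrow> 'a \<Rightarrow> 'a) \<Rightarrow> 'a \<Rightarrow> bool" where
  "rcc_loop L m e \<longleftrightarrow> loop L m e \<and>
     (\<forall>g \<in> carrier (env_group L m). \<forall>t \<in> env_T L m.
        g \<otimes>\<^bsub>env_group L m\<^esub> t \<otimes>\<^bsub>env_group L m\<^esub> inv\<^bsub>env_group L m\<^esub> g \<in> env_T L m)"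

text \<open>The wreath product C_p wr C_2 = (C_p x C_p) \<rtimes> C_2, C_2 swapping the coordinates.\<close>
fun wr_mult :: "nat \<Rightarrow> nat \<times> nat \<times> bool \<Rightarrow> nat \<times> nat \<times> bool \<Rightarrow> nat \<times> nat \<times> bool" where
  "wr_mult p (x1, y1, b1) (x2, y2, b2) =
     (if b1 then ((x1 + y2) mod p, (y1 + x2) mod p, b1 \<noteq> b2)
            else ((x1 + x2) mod p, (y1 + y2) mod p, b1 \<noteq> b2))"

definition wreath_Cp_C2 :: "nat \<Rightarrow> (nat \<times> nat \<times> bool) monoid" where
  "wreath_Cp_C2 p = \<lparr> carrier = {(x, y, b). x < p \<and> y < p}, monoid.mult = wr_mult p, one = (0, 0, False) \<rparr>"

end

theory Submission
  imports Defs
begin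

text \<open>
  Since \<open>|G : K| = 2\<close>, the subgroup \<open>K\<close> is normal in \<open>G\<close>, so for \<open>a \<notin> K\<close> the conjugate
  \<open>H\<^sup>a\<close> is again a normal subgroup of \<open>K\<close>. The stabiliser \<open>H\<close> contains no nontrivial normal
  subgroup of \<open>G\<close>, because \<open>G\<close> acts faithfully and transitively on the loop; as every element
  of \<open>G\<close> lies in \<open>K\<close> or \<open>K a\<close>, this forces \<open>H \<inter> H\<^sup>a = 1\<close>. Hence \<open>|H|\<^sup>2 = |H H\<^sup>a|\<close> divides
  \<open>|K| = p |H|\<close>, so \<open>|H| = p\<close> and \<open>K = H \<times> H\<^sup>a\<close>. As \<open>|G| = 2p\<^sup>2\<close> is even while \<open>|K|\<close> is odd,
  a Sylow 2-subgroup yields an involution \<open>a \<notin> K\<close>; for any \<open>1 \<noteq> x \<in> H\<close> the elements \<open>x\<close>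
  and \<open>y = a x a\<close> commute, and \<open>(i, j, b) \<mapsto> x\<^sup>i y\<^sup>j a\<^sup>b\<close> is an isomorphism
  \<open>C\<^sub>p \<wr> C\<^sub>2 \<rightarrow> G\<close>.
\<close>

lemma iso_set_sym_of_closed:
  assumes "h \<in> iso A B"
    and closed: "\<And>x y. x \<in> carrier A \<Longrightarrow> y \<in> carrier A \<Longrightarrow> x \<otimes>\<^bsub>A\<^esub> y \<in> carrier A"
  shows "inv_into (carrier A) h \<in> iso B A"
proof -
  have hom: "h \<in> hom A B" and bij: "bij_betw h (carrier A) (carrier B)"
    using assms by (auto simp: iso_def)
  have bij_inv: "bij_betw (inv_into (carrier A) h) (carrier B) (carrier A)"
    using bij by (rule bij_betw_inv_into)
  have inv_closed: "inv_into (carrier A) h x \<in> carrier A" if "x \<in> carrier B" for x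
    using bij_inv that by (rule bij_betw_apply)
  have "inv_into (carrier A) h (x \<otimes>\<^bsub>B\<^esub> y)
      = inv_into (carrier A) h x \<otimes>\<^bsub>A\<^esub> inv_into (carrier A) h y"
    if "x \<in> carrier B" "y \<in> carrier B" for x y
  proof (rule inv_into_f_eq)
    show "inj_on h (carrier A)" using bij by (rule bij_betw_imp_inj_on)
    show "inv_into (carrier A) h x \<otimes>\<^bsub>A\<^esub> inv_into (carrier A) h y \<in> carrier A"
      using that by (simp add: inv_closed closed)
    show "h (inv_into (carrier A) h x \<otimes>\<^bsub>A\<^esub> inv_into (carrier A) h y) = x \<otimes>\<^bsub>B\<^esub> y"
      using that hom bij bij_betw_inv_into_right[OF bij] by (simp add: inv_closed hom_mult)
  qed
  then show ?thesis
    using bij_inv inv_closed by (auto simp: iso_def hom_def)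
qed

context group
begin

lemma mult_inv_cancel_left [simp]:
  "x \<in> carrier G \<Longrightarrow> y \<in> carrier G \<Longrightarrow> x \<otimes> (inv x \<otimes> y) = y"
  by (simp add: m_assoc[symmetric])

lemma inv_mult_cancel_left [simp]:
  "x \<in> carrier G \<Longrightarrow> y \<in> carrier G \<Longrightarrow> inv x \<otimes> (x \<otimes> y) = y"
  by (simp add: m_assoc[symmetric])

lemma nat_pow_mod:
  assumes "x \<in> carrier G" "x [^] (p::nat) = \<one>"
  shows "x [^] (n mod p) = x [^] n"
proof -
  have "x [^] n = x [^] (p * (n div p) + n mod p)" by simp
  also have "\<dots> = (x [^] p) [^] (n div p) \<otimes> x [^] (n mod p)"
    using assms(1) by (simp only: nat_pow_mult nat_pow_pow)
  finally show ?thesis using assms by simp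
qed

lemma inv_conj_nat_pow:
  assumes "x \<in> carrier G" "a \<in> carrier G"
  shows "(inv a \<otimes> x \<otimes> a) [^] (n::nat) = inv a \<otimes> x [^] n \<otimes> a"
proof (induction n)
  case 0 then show ?case using assms by simp
next
  case (Suc n)
  have "(inv a \<otimes> x \<otimes> a) [^] Suc n = inv a \<otimes> x [^] n \<otimes> (a \<otimes> inv a) \<otimes> x \<otimes> a"
    using Suc assms by (simp add: m_assoc)
  then show ?case using assms by (simp add: m_assoc)
qed

lemma nat_pow_commute:
  assumes x: "x \<in> carrier G" and y: "y \<in> carrier G" and xy: "x \<otimes> y = y \<otimes> x"
  shows "x [^] (n::nat) \<otimes> y [^] (m::nat) = y [^] m \<otimes> x [^] n"
proof -
  have commute_pow: "z [^] (k::nat) \<otimes> w = w \<otimes> z [^] k"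
    if "z \<in> carrier G" "w \<in> carrier G" "z \<otimes> w = w \<otimes> z" for z w k
  proof (induction k)
    case (Suc k)
    have "z [^] Suc k \<otimes> w = z [^] k \<otimes> (z \<otimes> w)" using that by (simp add: m_assoc)
    also have "\<dots> = (z [^] k \<otimes> w) \<otimes> z" using that by (simp add: m_assoc)
    finally show ?case using Suc that by (simp add: m_assoc)
  qed (use that in simp)
  have "x [^] n \<otimes> y = y \<otimes> x [^] n" using commute_pow x y xy .
  then show ?thesis using commute_pow[of y "x [^] n" m] x y by simp
qed

lemma nat_pow_inj_below_prime:
  assumes "x \<in> carrier G" "x \<noteq> \<one>" "x [^] p = \<one>" "Factorial_Ring.prime p"
    and "i < p" "j < p" "x [^] i = x [^] (j::nat)"
  shows "i = j"
proof -
  have "ord x dvd p" "ord x \<noteq> 1"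
    using assms(1-3) pow_eq_id ord_eq_1 by auto
  then have "ord x = p" using assms(4) by (auto simp: prime_nat_iff)
  then show ?thesis
    using ord_inj[OF assms(1)] assms(5-7) by (auto simp: inj_on_def)
qed

lemma subgroup_nat_pow_closed:
  assumes "subgroup H G" "x \<in> H"
  shows "x [^] (n::nat) \<in> H"
  using assms by (induction n) (simp_all add: subgroup.one_closed subgroup.m_closed)

lemma pow_card_subgroup:
  assumes S: "subgroup S G" and "finite S" and "x \<in> S"
  shows "x [^] card S = \<one>"
proof -
  interpret S: group "G\<lparr>carrier := S\<rparr>" using S by (rule subgroup.subgroup_is_group) (rule is_group)
  have "x [^]\<^bsub>G\<lparr>carrier := S\<rparr>\<^esub> order (G\<lparr>carrier := S\<rparr>) = \<one>"
    using S.pow_order_eq_1 assms by simp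
  then show ?thesis by (simp add: order_def flip: nat_pow_consistent)
qed

lemma inv_outside_subgroup:
  assumes K: "subgroup K G" and x: "x \<in> carrier G - K"
  shows "inv x \<in> carrier G - K"
proof -
  have "inv x \<notin> K"
  proof
    assume "inv x \<in> K"
    then have "inv (inv x) \<in> K" by (rule subgroup.m_inv_closed[OF K])
    then show False using x by simp
  qed
  then show ?thesis using x by simp
qed

lemma mult_outside_subgroup:
  assumes K: "subgroup K G" and "k \<in> K" and a: "a \<in> carrier G - K"
  shows "k \<otimes> a \<notin> K"
proof
  assume "k \<otimes> a \<in> K"
  then have "inv k \<otimes> (k \<otimes> a) \<in> K"
    using K \<open>k \<in> K\<close> by (simp add: subgroup.m_closed subgroup.m_inv_closed)
  then show False using a subgroup.mem_carrier[OF K \<open>k \<in> K\<close>] by simp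
qed

lemma card_subgroup_dvd:
  assumes S: "subgroup S G" and K: "subgroup K G" and "S \<subseteq> K"
  shows "card S dvd card K"
proof -
  interpret K: group "G\<lparr>carrier := K\<rparr>" using K by (rule subgroup.subgroup_is_group) (rule is_group)
  have "subgroup S (G\<lparr>carrier := K\<rparr>)" using subgroup_incl[OF S K \<open>S \<subseteq> K\<close>] .
  then have "card (rcosets\<^bsub>G\<lparr>carrier := K\<rparr>\<^esub> S) * card S = card K"
    using K.lagrange by (simp add: order_def)
  then show ?thesis by (metis dvd_triv_right)
qed

lemma exists_involution_outside_odd_subgroup:
  assumes fin: "finite (carrier G)" and "even (order G)"
    and K: "subgroup K G" and "odd (card K)"
  shows "\<exists>a \<in> carrier G - K. a \<noteq> \<one> \<and> a \<otimes> a = \<one>"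
proof -
  have "\<exists>Q. subgroup Q G \<and> card Q = 2 ^ 1"
    by (rule sylow_thm[OF two_is_prime_nat is_group _ fin, of 1 "order G div 2"]) (use \<open>even (order G)\<close> in simp)
  then obtain Q where Q: "subgroup Q G" "card Q = 2" unfolding power_one_right by blast
  obtain a where a: "Q = {\<one>, a}" "a \<noteq> \<one>"
  proof -
    obtain u v where "Q = {u, v}" "u \<noteq> v" using Q(2) unfolding card_2_iff by blast
    moreover have "\<one> \<in> Q" by (rule subgroup.one_closed[OF Q(1)])
    ultimately show ?thesis using that by (auto simp: insert_commute)
  qed
  have "a \<in> Q" using a by blast
  then have a_carrier: "a \<in> carrier G" and "a \<otimes> a \<in> Q"
    using subgroup.mem_carrier[OF Q(1)] subgroup.m_closed[OF Q(1)] by blast+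
  moreover have "a \<otimes> a \<noteq> a" using a a_carrier by (metis l_cancel_one')
  ultimately have "a \<otimes> a = \<one>" using a by blast
  moreover have "a \<notin> K"
  proof
    assume "a \<in> K"
    then have "card Q dvd card K" using card_subgroup_dvd[OF Q(1) K] a subgroup.one_closed[OF K] by blast
    then show False using Q(2) \<open>odd (card K)\<close> by simp
  qed
  ultimately show ?thesis using a a_carrier by blast
qed

lemma normal_in_subgroup_iff:
  assumes K: "subgroup K G"
  shows "N \<lhd> G\<lparr>carrier := K\<rparr> \<longleftrightarrow>
    subgroup N G \<and> N \<subseteq> K \<and> (\<forall>k\<in>K. \<forall>n\<in>N. k \<otimes> n \<otimes> inv k \<in> N)"
proof -
  interpret K: group "G\<lparr>carrier := K\<rparr>" using K by (rule subgroup.subgroup_is_group) (rule is_group)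
  have "subgroup N (G\<lparr>carrier := K\<rparr>) \<longleftrightarrow> subgroup N G \<and> N \<subseteq> K"
  proof
    assume "subgroup N (G\<lparr>carrier := K\<rparr>)"
    then show "subgroup N G \<and> N \<subseteq> K"
      using incl_subgroup[OF K] subgroup.subset by fastforce
  qed (use subgroup_incl K in blast)
  then show ?thesis
    unfolding K.normal_inv_iff using m_inv_consistent[OF K] by auto
qed

lemma index_two_obtain_outside:
  assumes K: "subgroup K G" and index: "card (rcosets K) = 2"
  obtains a where "a \<in> carrier G - K"
proof -
  have "carrier G - K \<noteq> {}"
  proof
    assume "carrier G - K = {}"
    then have "rcosets K = {K}"
      using coset_join2[OF _ K] unfolding RCOSETS_def by auto
    then show False using index by simp
  qed
  then show ?thesis using that by blast
qed

lemma index_two_mult_closed: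
  assumes K: "subgroup K G" and index: "card (rcosets K) = 2"
    and x: "x \<in> carrier G - K" and y: "y \<in> carrier G - K"
  shows "x \<otimes> y \<in> K"
proof -
  have K_carrier: "K \<subseteq> carrier G" using K by (rule subgroup.subset)
  have inv_y: "inv y \<in> carrier G - K" using inv_outside_subgroup[OF K y] .
  have cosets: "K \<in> rcosets K" "K #> x \<in> rcosets K" "K #> inv y \<in> rcosets K"
    using rcosetsI[OF K_carrier] x inv_y coset_mult_one[OF K_carrier] by (metis DiffD1 one_closed)+
  have distinct: "K #> x \<noteq> K" "K #> inv y \<noteq> K"
    using rcos_self[OF _ K] x inv_y by auto
  have "K #> x = K #> inv y"
  proof (rule ccontr)
    assume "K #> x \<noteq> K #> inv y"
    then have "card {K, K #> x, K #> inv y} = 3" using distinct by auto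
    moreover have "card {K, K #> x, K #> inv y} \<le> card (rcosets K)"
      using cosets index by (intro card_mono) (auto intro: card_ge_0_finite)
    ultimately show False using index by simp
  qed
  then obtain k where "k \<in> K" "x = k \<otimes> inv y"
    using rcos_self[OF _ K, of x] x unfolding r_coset_def by auto
  then show ?thesis using K_carrier y by (auto simp: m_assoc)
qed

lemma index_two_imp_normal:
  assumes K: "subgroup K G" and index: "card (rcosets K) = 2"
  shows "K \<lhd> G"
  unfolding normal_inv_iff
proof (intro conjI K ballI)
  fix g k assume g: "g \<in> carrier G" and k: "k \<in> K"
  have k_carrier: "k \<in> carrier G" by (rule subgroup.mem_carrier[OF K k])
  show "g \<otimes> k \<otimes> inv g \<in> K"
  proof (cases "g \<in> K")
    case True
    then show ?thesis using k K by (simp add: subgroup.m_closed subgroup.m_inv_closed)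
  next
    case False
    have "g \<otimes> k \<notin> K"
    proof
      assume "g \<otimes> k \<in> K"
      then have "g \<otimes> k \<otimes> inv k \<in> K" using k K by (simp add: subgroup.m_closed subgroup.m_inv_closed)
      then show False using False g k_carrier by (simp add: m_assoc)
    qed
    moreover have "inv g \<notin> K" using False g K by (metis inv_inv subgroup.m_inv_closed)
    ultimately show ?thesis
      using index_two_mult_closed[OF K index] g k_carrier by simp
  qed
qed

definition conjugate :: "'a \<Rightarrow> 'a set \<Rightarrow> 'a set" where
  "conjugate a H = {inv a \<otimes> h \<otimes> a | h. h \<in> H}"

lemma subgroup_conjugate:
  assumes "subgroup H G" "a \<in> carrier G"
  shows "subgroup (conjugate a H) G"
proof -
  have "conjugate a H = inv a <# H #> a"
    by (auto simp: conjugate_def l_coset_def r_coset_def)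
  then show ?thesis using subgroup_conjugation_is_surj1[OF assms(2,1)] by simp
qed

lemma card_conjugate:
  assumes "H \<subseteq> carrier G" "a \<in> carrier G"
  shows "card (conjugate a H) = card H"
proof -
  have "conjugate a H = (\<lambda>h. inv a \<otimes> h \<otimes> a) ` H" by (auto simp: conjugate_def)
  moreover have "inj_on (\<lambda>h. inv a \<otimes> h \<otimes> a) H"
  proof (rule inj_onI)
    fix x y assume "x \<in> H" "y \<in> H" "inv a \<otimes> x \<otimes> a = inv a \<otimes> y \<otimes> a"
    then show "x = y" using conjugation_is_inj[of "inv a" x y] assms by auto
  qed
  ultimately show ?thesis by (simp add: card_image)
qed

lemma conjugate_normal_in_normal_subgroup:
  assumes K: "K \<lhd> G" and H: "H \<lhd> G\<lparr>carrier := K\<rparr>" and a: "a \<in> carrier G"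
  shows "conjugate a H \<lhd> G\<lparr>carrier := K\<rparr>"
proof -
  have K_sub: "subgroup K G" using K by (rule normal_imp_subgroup)
  have H_sub: "subgroup H G" "H \<subseteq> K" and H_conj: "\<And>k h. k \<in> K \<Longrightarrow> h \<in> H \<Longrightarrow> k \<otimes> h \<otimes> inv k \<in> H"
    using H unfolding normal_in_subgroup_iff[OF K_sub] by blast+
  have carrier: "\<And>x. x \<in> K \<Longrightarrow> x \<in> carrier G" "\<And>h. h \<in> H \<Longrightarrow> h \<in> carrier G"
    using subgroup.mem_carrier[OF K_sub] subgroup.mem_carrier[OF H_sub(1)] by auto
  have "conjugate a H \<subseteq> K"
    using K a H_sub carrier unfolding conjugate_def normal_inv_iff by (force dest: bspec[of _ _ "inv a"])
  moreover have "k \<otimes> (inv a \<otimes> h \<otimes> a) \<otimes> inv k \<in> conjugate a H" if "k \<in> K" "h \<in> H" for k h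
  proof -
    define c where "c = a \<otimes> k \<otimes> inv a"
    have "c \<in> K" using K a \<open>k \<in> K\<close> unfolding c_def normal_inv_iff by blast
    moreover have "k \<otimes> (inv a \<otimes> h \<otimes> a) \<otimes> inv k = inv a \<otimes> (c \<otimes> h \<otimes> inv c) \<otimes> a"
      using a that carrier by (simp add: c_def m_assoc inv_mult_group)
    ultimately show ?thesis using H_conj \<open>h \<in> H\<close> unfolding conjugate_def by blast
  qed
  ultimately show ?thesis
    unfolding normal_in_subgroup_iff[OF K_sub] conjugate_def
    using subgroup_conjugate[OF H_sub(1) a] by (auto simp: conjugate_def)
qed

definition core_free :: "'a set \<Rightarrow> bool" where
  "core_free H \<longleftrightarrow> (\<forall>g\<in>H. (\<forall>x\<in>carrier G. x \<otimes> g \<otimes> inv x \<in> H) \<longrightarrow> g = \<one>)"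

lemma core_free_inter_conjugate:
  assumes K: "subgroup K G" and index: "card (rcosets K) = 2"
    and H: "H \<lhd> G\<lparr>carrier := K\<rparr>" and "core_free H" and a: "a \<in> carrier G - K"
  shows "H \<inter> conjugate a H = {\<one>}"
proof -
  have H_sub: "subgroup H G" "H \<subseteq> K" and H_conj: "\<And>k h. k \<in> K \<Longrightarrow> h \<in> H \<Longrightarrow> k \<otimes> h \<otimes> inv k \<in> H"
    using H unfolding normal_in_subgroup_iff[OF K] by blast+
  have trivial: "g = \<one>" if g: "g \<in> H" and h: "h \<in> H" "g = inv a \<otimes> h \<otimes> a" for g h
  proof -
    have "x \<otimes> g \<otimes> inv x \<in> H" if x: "x \<in> carrier G" for x
    proof (cases "x \<in> K")
      case True
      then show ?thesis using H_conj g by blast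
    next
      case False
      have "inv a \<in> carrier G - K" using inv_outside_subgroup[OF K a] .
      then have "x \<otimes> inv a \<in> K" using index_two_mult_closed[OF K index] x False by blast
      moreover have "x \<otimes> g \<otimes> inv x = (x \<otimes> inv a) \<otimes> h \<otimes> inv (x \<otimes> inv a)"
        using x a h subgroup.mem_carrier[OF H_sub(1) h(1)] by (simp add: m_assoc inv_mult_group)
      ultimately show ?thesis using H_conj h by simp
    qed
    then show ?thesis using \<open>core_free H\<close> g unfolding core_free_def by simp
  qed
  have "\<one> \<in> conjugate a H"
    using subgroup.one_closed[OF subgroup_conjugate[OF H_sub(1)]] a by blast
  moreover have "H \<inter> conjugate a H \<subseteq> {\<one>}"
  proof
    fix g assume "g \<in> H \<inter> conjugate a H"
    then obtain h where "g \<in> H" "h \<in> H" "g = inv a \<otimes> h \<otimes> a" unfolding conjugate_def by blast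
    then show "g \<in> {\<one>}" using trivial by blast
  qed
  ultimately show ?thesis using subgroup.one_closed[OF H_sub(1)] by auto
qed

lemma disjoint_subgroups_mult_unique:
  assumes M: "subgroup M G" and N: "subgroup N G" and disjoint: "M \<inter> N = {\<one>}"
    and "x1 \<in> M" "x2 \<in> M" "y1 \<in> N" "y2 \<in> N" and eq: "x1 \<otimes> y1 = x2 \<otimes> y2"
  shows "x1 = x2 \<and> y1 = y2"
proof -
  have carrier: "x1 \<in> carrier G" "x2 \<in> carrier G" "y1 \<in> carrier G" "y2 \<in> carrier G"
    using assms subgroup.mem_carrier by metis+
  have "inv x2 \<otimes> x1 = y2 \<otimes> inv y1"
  proof -
    have "inv x2 \<otimes> (x1 \<otimes> y1) \<otimes> inv y1 = inv x2 \<otimes> (x2 \<otimes> y2) \<otimes> inv y1" by (simp only: eq)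
    then show ?thesis using carrier by (simp add: m_assoc)
  qed
  moreover have "inv x2 \<otimes> x1 \<in> M" "y2 \<otimes> inv y1 \<in> N"
    using assms by (simp_all add: subgroup.m_closed subgroup.m_inv_closed)
  ultimately have "inv x2 \<otimes> x1 = \<one>" using disjoint by auto
  then have "x1 = x2" using carrier by (metis inv_equality inv_inv inv_closed)
  then show ?thesis using eq carrier l_cancel by blast
qed

lemma card_set_mult_disjoint:
  assumes "subgroup M G" "subgroup N G" "M \<inter> N = {\<one>}"
  shows "card (M <#> N) = card M * card N"
proof -
  have "M <#> N = (\<lambda>(x, y). x \<otimes> y) ` (M \<times> N)" unfolding set_mult_def by auto
  moreover have "inj_on (\<lambda>(x, y). x \<otimes> y) (M \<times> N)"
    using disjoint_subgroups_mult_unique[OF assms] by (auto intro!: inj_onI)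
  ultimately show ?thesis by (simp add: card_image card_cartesian_product)
qed

lemma disjoint_normal_subgroups_commute:
  assumes M: "M \<lhd> G" and N: "N \<lhd> G" and disjoint: "M \<inter> N = {\<one>}" and "x \<in> M" "y \<in> N"
  shows "x \<otimes> y = y \<otimes> x"
proof -
  have carrier: "x \<in> carrier G" "y \<in> carrier G"
    using assms normal_imp_subgroup subgroup.mem_carrier by metis+
  have "x \<otimes> (y \<otimes> inv x \<otimes> inv y) \<in> M"
    using M \<open>x \<in> M\<close> carrier unfolding normal_inv_iff
    by (metis m_assoc inv_closed subgroup.m_closed subgroup.m_inv_closed)
  moreover have "x \<otimes> y \<otimes> inv x \<otimes> inv y \<in> N"
    using N \<open>y \<in> N\<close> carrier unfolding normal_inv_iff by (simp add: subgroup.m_closed subgroup.m_inv_closed)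
  ultimately have "x \<otimes> y \<otimes> inv x \<otimes> inv y = \<one>"
    using disjoint carrier by (auto simp: m_assoc)
  then have "x \<otimes> y \<otimes> inv (y \<otimes> x) = \<one>" using carrier by (simp add: inv_mult_group m_assoc)
  then show ?thesis using carrier by (metis inv_equality inv_inv m_closed inv_closed)
qed

definition wreath_map :: "'a \<Rightarrow> 'a \<Rightarrow> 'a \<Rightarrow> nat \<times> nat \<times> bool \<Rightarrow> 'a" where
  "wreath_map x y a = (\<lambda>(i, j, b). x [^] i \<otimes> y [^] j \<otimes> (if b then a else \<one>))"

lemma wreath_map_hom:
  assumes x: "x \<in> carrier G" and y: "y \<in> carrier G" and a: "a \<in> carrier G"
    and "x [^] p = \<one>" "y [^] p = \<one>" and xy: "x \<otimes> y = y \<otimes> x"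
    and aa: "a \<otimes> a = \<one>" and axa: "a \<otimes> x \<otimes> a = y"
  shows "wreath_map x y a \<in> hom (wreath_Cp_C2 p) G"
proof -
  have inv_a: "inv a = a" by (rule inv_equality[OF aa a a])
  have aya: "a \<otimes> y \<otimes> a = x"
  proof -
    have "a \<otimes> y \<otimes> a = (a \<otimes> a) \<otimes> x \<otimes> (a \<otimes> a)"
      using axa[symmetric] a x by (simp add: m_assoc)
    then show ?thesis using aa x by simp
  qed
  have conj_swap: "a \<otimes> z [^] n = w [^] n \<otimes> a"
    if "z \<in> carrier G" "w \<in> carrier G" "a \<otimes> z \<otimes> a = w" for z w and n :: nat
  proof -
    have "a \<otimes> z [^] n \<otimes> a = w [^] n"
      using inv_conj_nat_pow[OF that(1) a, of n] that(3) inv_a by simp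
    then show ?thesis using that a aa by (metis m_assoc r_one nat_pow_closed m_closed)
  qed
  have reassoc: "u \<otimes> (v \<otimes> z) = w \<otimes> (t \<otimes> z)"
    if "u \<otimes> v = w \<otimes> t" "u \<in> carrier G" "v \<in> carrier G" "w \<in> carrier G" "t \<in> carrier G"
      "z \<in> carrier G" for u v w t z
    using that by (metis m_assoc)
  \<comment> \<open>Rewrite rules that bring right-nested products into the normal form \<open>x\<^sup>i y\<^sup>j a\<^sup>b\<close>.\<close>
  have swap_x: "a \<otimes> (x [^] n \<otimes> z) = y [^] n \<otimes> (a \<otimes> z)"
    and swap_y: "a \<otimes> (y [^] n \<otimes> z) = x [^] n \<otimes> (a \<otimes> z)"
    and swap_xy: "y [^] n \<otimes> (x [^] k \<otimes> z) = x [^] k \<otimes> (y [^] n \<otimes> z)"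
    and cancel_a: "a \<otimes> (a \<otimes> z) = z"
    if "z \<in> carrier G" for z and n k :: nat
    using reassoc[OF conj_swap[OF x y axa]] reassoc[OF conj_swap[OF y x aya]]
      reassoc[OF nat_pow_commute[OF y x xy[symmetric]]] that x y a aa
    by (simp_all add: m_assoc[symmetric])
  have add_x: "x [^] (i + k) = x [^] i \<otimes> x [^] (k::nat)"
    and add_y: "y [^] (i + k) = y [^] i \<otimes> y [^] (k::nat)" for i k
    using x y by (simp_all add: nat_pow_mult)
  show ?thesis
  proof (rule homI)
    fix u v assume "u \<in> carrier (wreath_Cp_C2 p)" "v \<in> carrier (wreath_Cp_C2 p)"
    obtain i1 j1 b1 i2 j2 b2 where "u = (i1, j1, b1)" "v = (i2, j2, b2)"
      by (cases u, cases v) auto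
    then show "wreath_map x y a (u \<otimes>\<^bsub>wreath_Cp_C2 p\<^esub> v) = wreath_map x y a u \<otimes> wreath_map x y a v"
      using x y a aa
      by (cases b1; cases b2)
        (simp_all add: wreath_map_def wreath_Cp_C2_def nat_pow_mod assms add_x add_y m_assoc
          swap_x swap_y swap_xy cancel_a conj_swap[OF x y axa] conj_swap[OF y x aya]
          nat_pow_commute[OF y x xy[symmetric]])
  qed (auto simp: wreath_map_def x y a)
qed

end

lemma wreath_Cp_C2_closed:
  assumes "p > 0" "x \<in> carrier (wreath_Cp_C2 p)" "y \<in> carrier (wreath_Cp_C2 p)"
  shows "x \<otimes>\<^bsub>wreath_Cp_C2 p\<^esub> y \<in> carrier (wreath_Cp_C2 p)"
  using assms by (cases x; cases y) (auto simp: wreath_Cp_C2_def)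

lemma card_wreath_Cp_C2: "card (carrier (wreath_Cp_C2 p)) = 2 * p * p"
proof -
  have "carrier (wreath_Cp_C2 p) = {..<p} \<times> {..<p} \<times> (UNIV :: bool set)"
    by (auto simp: wreath_Cp_C2_def)
  then show ?thesis by (simp add: card_cartesian_product)
qed

locale index_two_core_free = group G for G (structure) +
  fixes K H :: "'a set"
  assumes finite_carrier: "finite (carrier G)"
    and subgroup_K: "subgroup K G" and index_two: "card (rcosets K) = 2"
    and normal_H: "H \<lhd> G\<lparr>carrier := K\<rparr>" and core_free_H: "core_free H"
begin

lemma subgroup_H: "subgroup H G" and H_subset_K: "H \<subseteq> K"
  using normal_H unfolding normal_in_subgroup_iff[OF subgroup_K] by blast+

lemma normal_conjugate: "a \<in> carrier G \<Longrightarrow> conjugate a H \<lhd> G\<lparr>carrier := K\<rparr>"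
  using conjugate_normal_in_normal_subgroup index_two_imp_normal[OF subgroup_K index_two] normal_H
  by blast

lemma conjugate_subset_K: "a \<in> carrier G \<Longrightarrow> conjugate a H \<subseteq> K"
  using normal_conjugate unfolding normal_in_subgroup_iff[OF subgroup_K] by blast

lemma inter_conjugate: "a \<in> carrier G - K \<Longrightarrow> H \<inter> conjugate a H = {\<one>}"
  using core_free_inter_conjugate[OF subgroup_K index_two normal_H core_free_H] .

lemma subgroup_set_mult_conjugate:
  assumes "a \<in> carrier G"
  shows "subgroup (H <#> conjugate a H) G" "H <#> conjugate a H \<subseteq> K"
proof -
  interpret K: group "G\<lparr>carrier := K\<rparr>" using subgroup_K by (rule subgroup.subgroup_is_group) (rule is_group)
  have "H <#>\<^bsub>G\<lparr>carrier := K\<rparr>\<^esub> conjugate a H = H <#> conjugate a H"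
    by (simp add: set_mult_def)
  then have "H <#> conjugate a H \<lhd> G\<lparr>carrier := K\<rparr>"
    using K.normal_subgroup_set_mult_closed[OF normal_H normal_conjugate[OF assms]] by simp
  then show "subgroup (H <#> conjugate a H) G" "H <#> conjugate a H \<subseteq> K"
    unfolding normal_in_subgroup_iff[OF subgroup_K] by blast+
qed

lemma card_set_mult_conjugate:
  assumes "a \<in> carrier G - K"
  shows "card (H <#> conjugate a H) = card H * card H"
  using assms card_set_mult_disjoint[OF subgroup_H subgroup_conjugate[OF subgroup_H] inter_conjugate]
    card_conjugate[OF subgroup.subset[OF subgroup_H]] by simp

lemma commute_conjugate:
  assumes "a \<in> carrier G - K" "x \<in> H" "y \<in> conjugate a H"
  shows "x \<otimes> y = y \<otimes> x"
proof -
  interpret K: group "G\<lparr>carrier := K\<rparr>" using subgroup_K by (rule subgroup.subgroup_is_group) (rule is_group)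
  have a: "a \<in> carrier G" using assms(1) by blast
  have "H \<inter> conjugate a H = {\<one>\<^bsub>G\<lparr>carrier := K\<rparr>\<^esub>}" using inter_conjugate[OF assms(1)] by simp
  then show ?thesis
    using K.disjoint_normal_subgroups_commute[OF normal_H normal_conjugate[OF a] _ assms(2,3)] by simp
qed

end

locale prime_index_core_free = index_two_core_free +
  fixes p :: nat
  assumes prime_p: "Factorial_Ring.prime p"
    and index_p: "card (rcosets\<^bsub>G\<lparr>carrier := K\<rparr>\<^esub> H) = p"
    and H_nontrivial: "H \<noteq> {\<one>}"
begin

lemma finite_H: "finite H"
  using finite_carrier subgroup.subset[OF subgroup_H] by (rule finite_subset[rotated])

lemma card_K: "card K = p * card H"
proof -
  interpret K: group "G\<lparr>carrier := K\<rparr>" using subgroup_K by (rule subgroup.subgroup_is_group) (rule is_group)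
  have "card (rcosets\<^bsub>G\<lparr>carrier := K\<rparr>\<^esub> H) * card H = card K"
    using K.lagrange[OF subgroup_incl[OF subgroup_H subgroup_K H_subset_K]] by (simp add: order_def)
  then show ?thesis using index_p by simp
qed

lemma card_H: "card H = p"
proof -
  obtain a where a: "a \<in> carrier G - K" using index_two_obtain_outside[OF subgroup_K index_two] .
  have "a \<in> carrier G" using a by blast
  then have "card (H <#> conjugate a H) dvd card K"
    using card_subgroup_dvd[OF _ subgroup_K] subgroup_set_mult_conjugate by blast
  then have "card H * card H dvd card K" using card_set_mult_conjugate[OF a] by simp
  then have "card H dvd p" using card_K finite_H subgroup.one_closed[OF subgroup_H]
    by (metis card_gt_0_iff empty_iff mult.commute nat_mult_dvd_cancel1)
  moreover have "card H \<noteq> 1"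
    using H_nontrivial subgroup.one_closed[OF subgroup_H] by (metis card_1_singletonE singletonD)
  ultimately show ?thesis using prime_p by (auto simp: prime_nat_iff)
qed

lemma order_G: "order G = 2 * p * p"
  using lagrange[OF subgroup_K] index_two card_K card_H by simp

lemma set_mult_conjugate_eq_K:
  assumes "a \<in> carrier G - K"
  shows "H <#> conjugate a H = K"
proof (rule card_subset_eq)
  show "finite K" using finite_carrier subgroup.subset[OF subgroup_K] by (rule finite_subset[rotated])
  show "H <#> conjugate a H \<subseteq> K" using subgroup_set_mult_conjugate assms by blast
  show "card (H <#> conjugate a H) = card K"
    using card_set_mult_conjugate[OF assms] card_H card_K by simp
qed

lemma pow_p_eq_one:
  assumes "a \<in> carrier G" "x \<in> H \<union> conjugate a H"
  shows "x [^] p = \<one>"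
proof -
  have "finite (conjugate a H)" "card (conjugate a H) = p"
    using finite_H card_H card_conjugate[OF subgroup.subset[OF subgroup_H] assms(1)]
    by (auto simp: conjugate_def)
  then show ?thesis
    using assms pow_card_subgroup[OF subgroup_H finite_H] card_H
      pow_card_subgroup[OF subgroup_conjugate[OF subgroup_H assms(1)]] by auto
qed

lemma exists_involution_outside_K:
  assumes "odd p"
  obtains a where "a \<in> carrier G - K" "a \<noteq> \<one>" "a \<otimes> a = \<one>"
proof -
  have "even (order G)" "odd (card K)" using order_G card_K card_H assms by simp_all
  then show ?thesis
    using exists_involution_outside_odd_subgroup[OF finite_carrier _ subgroup_K] that by blast
qed

lemma involution_splits_K:
  assumes "odd p"
  shows "\<exists>a \<in> carrier G - K. a \<noteq> \<one> \<and> a \<otimes> a = \<one> \<and> conjugate a H \<lhd> G\<lparr>carrier := K\<rparr>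
           \<and> H \<inter> conjugate a H = {\<one>} \<and> H <#> conjugate a H = K"
proof -
  obtain a where a: "a \<in> carrier G - K" "a \<noteq> \<one>" "a \<otimes> a = \<one>"
    using exists_involution_outside_K[OF assms] .
  then show ?thesis
    using normal_conjugate inter_conjugate[OF a(1)] set_mult_conjugate_eq_K[OF a(1)] by blast
qed

lemma wreath_map_inj_on:
  assumes a: "a \<in> carrier G - K" and x: "x \<in> H" "x \<noteq> \<one>" and y: "y \<in> conjugate a H" "y \<noteq> \<one>"
  shows "inj_on (wreath_map x y a) (carrier (wreath_Cp_C2 p))"
proof (rule inj_onI)
  fix u v
  assume "u \<in> carrier (wreath_Cp_C2 p)" "v \<in> carrier (wreath_Cp_C2 p)"
    and "wreath_map x y a u = wreath_map x y a v"
  moreover obtain i1 j1 b1 i2 j2 b2 where uv: "u = (i1, j1, b1)" "v = (i2, j2, b2)"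
    by (cases u, cases v) auto
  ultimately have eq: "wreath_map x y a (i1, j1, b1) = wreath_map x y a (i2, j2, b2)"
    and below: "i1 < p" "j1 < p" "i2 < p" "j2 < p" by (auto simp: wreath_Cp_C2_def)
  have a_carrier: "a \<in> carrier G" using a by blast
  have x_pow: "x [^] (i::nat) \<in> H" and y_pow: "y [^] (j::nat) \<in> conjugate a H" for i j
    using subgroup_nat_pow_closed[OF subgroup_H x(1)]
      subgroup_nat_pow_closed[OF subgroup_conjugate[OF subgroup_H a_carrier] y(1)] by auto
  have carrier: "x \<in> carrier G" "y \<in> carrier G"
    using x y H_subset_K conjugate_subset_K[OF a_carrier] subgroup.mem_carrier[OF subgroup_K] by blast+
  define k1 k2 where "k1 = x [^] i1 \<otimes> y [^] j1" and "k2 = x [^] i2 \<otimes> y [^] j2"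
  have k_in_K: "k1 \<in> K" "k2 \<in> K"
    unfolding k1_def k2_def using x_pow y_pow H_subset_K conjugate_subset_K[OF a_carrier]
    by (blast intro: subgroup.m_closed[OF subgroup_K])+
  have eq': "k1 \<otimes> (if b1 then a else \<one>) = k2 \<otimes> (if b2 then a else \<one>)"
    using eq by (simp add: wreath_map_def k1_def k2_def)
  have "b1 = b2"
    using eq' k_in_K mult_outside_subgroup[OF subgroup_K _ a] subgroup.mem_carrier[OF subgroup_K]
    by (cases b1; cases b2) auto
  then have "k1 = k2"
    using eq' k_in_K a_carrier subgroup.mem_carrier[OF subgroup_K] by (cases b1) (simp_all add: r_cancel)
  then have "x [^] i1 = x [^] i2 \<and> y [^] j1 = y [^] j2"
    unfolding k1_def k2_def
    using disjoint_subgroups_mult_unique[OF subgroup_H subgroup_conjugate[OF subgroup_H a_carrier]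
        inter_conjugate[OF a] x_pow x_pow y_pow y_pow] by blast
  then show "u = v" unfolding uv
    using nat_pow_inj_below_prime[OF carrier(1) x(2) pow_p_eq_one prime_p] below
      nat_pow_inj_below_prime[OF carrier(2) y(2) pow_p_eq_one prime_p] \<open>b1 = b2\<close> x y a_carrier
    by auto
qed

theorem iso_wreath_Cp_C2:
  assumes "odd p"
  shows "G \<cong> wreath_Cp_C2 p"
proof -
  obtain a where a: "a \<in> carrier G - K" "a \<otimes> a = \<one>" using exists_involution_outside_K[OF assms] .
  obtain x where x: "x \<in> H" "x \<noteq> \<one>" using H_nontrivial subgroup.one_closed[OF subgroup_H] by blast
  define y where "y = a \<otimes> x \<otimes> a"
  have a_carrier: "a \<in> carrier G" and x_carrier: "x \<in> carrier G"
    using a x subgroup.mem_carrier[OF subgroup_H] by auto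
  have "inv a = a" by (rule inv_equality[OF a(2) a_carrier a_carrier])
  then have y: "y \<in> conjugate a H" unfolding y_def conjugate_def using x(1) by force
  have "a \<otimes> y \<otimes> a = (a \<otimes> a) \<otimes> x \<otimes> (a \<otimes> a)"
    unfolding y_def using a_carrier x_carrier by (simp add: m_assoc)
  then have "a \<otimes> y \<otimes> a = x" using a(2) x_carrier by simp
  then have "y \<noteq> \<one>" using a(2) x(2) a_carrier by auto
  have y_carrier: "y \<in> carrier G" unfolding y_def using a_carrier x_carrier by simp
  have hom: "wreath_map x y a \<in> hom (wreath_Cp_C2 p) G"
    using wreath_map_hom[OF x_carrier y_carrier a_carrier _ _ commute_conjugate[OF a(1) x(1) y] a(2)]
      pow_p_eq_one[OF a_carrier] x y y_def by blast
  have inj: "inj_on (wreath_map x y a) (carrier (wreath_Cp_C2 p))"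
    using wreath_map_inj_on[OF a(1) x y \<open>y \<noteq> \<one>\<close>] .
  have "wreath_map x y a ` carrier (wreath_Cp_C2 p) = carrier G"
  proof (rule card_subset_eq[OF finite_carrier])
    show "wreath_map x y a ` carrier (wreath_Cp_C2 p) \<subseteq> carrier G"
      using hom by (auto simp: hom_def)
    show "card (wreath_map x y a ` carrier (wreath_Cp_C2 p)) = card (carrier G)"
      using card_image[OF inj] card_wreath_Cp_C2 order_G by (simp add: order_def)
  qed
  then have "wreath_map x y a \<in> iso (wreath_Cp_C2 p) G"
    using hom inj by (simp add: iso_def bij_betw_def)
  then have "inv_into (carrier (wreath_Cp_C2 p)) (wreath_map x y a) \<in> iso G (wreath_Cp_C2 p)"
    by (rule iso_set_sym_of_closed) (rule wreath_Cp_C2_closed[OF prime_gt_0_nat[OF prime_p]])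
  then show ?thesis by (rule is_isoI)
qed

end

lemma Rmap_in_Bij:
  assumes "loop L m e" "a \<in> L"
  shows "Rmap L m a \<in> Bij L"
proof -
  have "bij_betw (\<lambda>x. m x a) L L" using assms unfolding loop_def by blast
  then have "bij_betw (Rmap L m a) L L" unfolding Rmap_def by (rule bij_betw_cong[THEN iffD1, rotated]) simp
  then show ?thesis unfolding Bij_def Rmap_def by simp
qed

lemma subgroup_env_group:
  assumes "loop L m e"
  shows "subgroup (carrier (env_group L m)) (BijGroup L)"
proof -
  have "Rmap L m ` L \<subseteq> carrier (BijGroup L)"
    using Rmap_in_Bij[OF assms] by (auto simp: BijGroup_def)
  then show ?thesis
    unfolding env_group_def by (simp add: group.generate_is_subgroup[OF group_BijGroup])
qed

lemma group_env_group: "loop L m e \<Longrightarrow> group (env_group L m)"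
  using subgroup.subgroup_is_group[OF subgroup_env_group group_BijGroup] by (simp add: env_group_def)

lemma finite_env_group:
  assumes "loop L m e" "finite L"
  shows "finite (carrier (env_group L m))"
proof -
  have "carrier (env_group L m) \<subseteq> Bij L"
    using subgroup.subset[OF subgroup_env_group[OF assms(1)]] by (simp add: BijGroup_def)
  also have "Bij L \<subseteq> extensional_funcset L L"
    using Bij_imp_extensional Bij_imp_funcset unfolding PiE_def by blast
  finally have "carrier (env_group L m) \<subseteq> extensional_funcset L L" .
  moreover have "finite (extensional_funcset L L)" using assms(2) by (simp add: finite_PiE)
  ultimately show ?thesis by (rule finite_subset)
qed

lemma env_stab_core_free:
  assumes loop: "loop L m e"
  shows "group.core_free (env_group L m) (env_stab L m e)"
proof -
  interpret group "env_group L m" using group_env_group[OF loop] .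
  have e: "e \<in> L" using loop unfolding loop_def by blast
  have carrier_Bij: "carrier (env_group L m) \<subseteq> Bij L"
    using subgroup.subset[OF subgroup_env_group[OF loop]] by (simp add: BijGroup_def)
  have mult: "f \<otimes>\<^bsub>env_group L m\<^esub> g = compose L f g"
    if "f \<in> carrier (env_group L m)" "g \<in> carrier (env_group L m)" for f g
    using that carrier_Bij by (auto simp: env_group_def BijGroup_def)
  have "g = \<one>\<^bsub>env_group L m\<^esub>"
    if g: "g \<in> env_stab L m e"
      and conj: "\<forall>x\<in>carrier (env_group L m). x \<otimes>\<^bsub>env_group L m\<^esub> g \<otimes>\<^bsub>env_group L m\<^esub> inv\<^bsub>env_group L m\<^esub> x \<in> env_stab L m e"
    for g
  proof -
    have g_carrier: "g \<in> carrier (env_group L m)" and "g e = e" using g by (auto simp: env_stab_def)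
    \<comment> \<open>\<open>g\<close> and its conjugate by \<open>R\<^sub>y\<close> both fix \<open>e\<close>, so \<open>g\<close> fixes \<open>R\<^sub>y e = y\<close>.\<close>
    have "g y = y" if y: "y \<in> L" for y
    proof -
      define t where "t = Rmap L m y"
      have t: "t \<in> carrier (env_group L m)"
        unfolding t_def env_group_def using y by (simp add: generate.incl)
      have "t e = y" unfolding t_def Rmap_def using loop e y by (simp add: loop_def)
      define c where "c = inv\<^bsub>env_group L m\<^esub> t \<otimes>\<^bsub>env_group L m\<^esub> g \<otimes>\<^bsub>env_group L m\<^esub> t"
      have "c \<in> env_stab L m e" unfolding c_def using conj t by (metis inv_closed inv_inv)
      then have c: "c \<in> carrier (env_group L m)" "c e = e" by (auto simp: env_stab_def)
      have "t \<otimes>\<^bsub>env_group L m\<^esub> c = g \<otimes>\<^bsub>env_group L m\<^esub> t"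
        unfolding c_def using t g_carrier by (simp add: m_assoc)
      then have "compose L t c e = compose L g t e" using mult t c g_carrier by simp
      then show "g y = y" using e \<open>t e = y\<close> \<open>c e = e\<close> by (simp add: compose_def)
    qed
    moreover have "g \<in> extensional L" using g_carrier carrier_Bij Bij_imp_extensional by blast
    ultimately show ?thesis by (auto simp: env_group_def BijGroup_def extensional_def)
  qed
  then show ?thesis unfolding core_free_def by blast
qed

text \<open>
  Only the faithful transitive action of the envelope on the loop enters the proof.
\<close>

theorem corollary5p4:
  fixes L :: "'a set" and m :: "'a \<Rightarrow> 'a \<Rightarrow> 'a" and e :: 'a and p :: nat
    and K :: "('a \<Rightarrow> 'a) set"
  defines "G \<equiv> env_group L m" and "H \<equiv> env_stab L m e"
  assumes "Factorial_Ring.prime p" and "odd p"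
    and "finite L" and "card L = 2 * p"
    and "rcc_loop L m e"
    and "subgroup K G" and "H \<subset> K" and "K \<subset> carrier G"
    and "card (rcosets\<^bsub>G\<^esub> K) = 2"
    and "card (rcosets\<^bsub>G\<lparr>carrier := K\<rparr>\<^esub> H) = p"
    and "H \<noteq> {\<one>\<^bsub>G\<^esub>}"
    and "H \<lhd> G\<lparr>carrier := K\<rparr>"
  shows "card H = p
    \<and> (\<exists>a \<in> carrier G - K. a \<noteq> \<one>\<^bsub>G\<^esub> \<and> a \<otimes>\<^bsub>G\<^esub> a = \<one>\<^bsub>G\<^esub>
         \<and> (let Ha = {inv\<^bsub>G\<^esub> a \<otimes>\<^bsub>G\<^esub> h \<otimes>\<^bsub>G\<^esub> a | h. h \<in> H} in
              Ha \<lhd> G\<lparr>carrier := K\<rparr> \<and> H \<inter> Ha = {\<one>\<^bsub>G\<^esub>} \<and> H <#>\<^bsub>G\<^esub> Ha = K))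
    \<and> G \<cong> wreath_Cp_C2 p"
proof -
  have loop: "loop L m e" using \<open>rcc_loop L m e\<close> unfolding rcc_loop_def by blast
  interpret prime_index_core_free G K H p
    unfolding prime_index_core_free_def index_two_core_free_def index_two_core_free_axioms_def
      prime_index_core_free_axioms_def G_def H_def
    using group_env_group[OF loop] finite_env_group[OF loop \<open>finite L\<close>] env_stab_core_free[OF loop] assms
    by (simp add: G_def H_def)
  show ?thesis
    using card_H involution_splits_K[OF \<open>odd p\<close>] iso_wreath_Cp_C2[OF \<open>odd p\<close>]
    unfolding Let_def conjugate_def by blast
qed

end
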